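(* Let $K_n$, $C_n$ and $W_n$ be, respectively, the complete graph, the cycle and the wheel on $n\geq 3$ vertices. Then for every integer $k$ with $3\leq k\leq n$, $px_k(K_n)=px_k(C_n)=px_k(W_n)=2$.
   Context: All graphs are finite, simple, undirected and connected. An edge-coloring of a graph assigns a color to each edge (adjacent edges may receive the same color). A tree in an edge-colored graph is proper if any two adjacent edges of the tree receive different colors. For $S\subseteq V(G)$, an $S$-tree is a subgraph of $G$ that is a tree containing all vertices of $S$. For a connected graph $G$ of order $n$ and an integer $k$ with $2\le k\le n$, an edge-coloring of $G$ is a $k$-proper coloring if for every set $S$ of $k$ vertices of $G$ there exists a proper $S$-tree in $G$. The $k$-proper index $px_k(G)$ is the minimum number of colors used in a $k$-proper coloring of $G$. The wheel $W_n$ on $n$ vertices consists of a cycle on $n-1$ vertices together with one additional vertex adjacent to all vertices of that cycle. *)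

theory Defs
  imports Main
begin

definition adj :: "'a set set \<Rightarrow> 'a \<Rightarrow> 'a \<Rightarrow> bool" where
  "adj E u v \<longleftrightarrow> {u, v} \<in> E \<and> u \<noteq> v"

definition simple_graph :: "'a set \<Rightarrow> 'a set set \<Rightarrow> bool" where
  "simple_graph V E \<longleftrightarrow> finite V \<and> (\<forall>e\<in>E. \<exists>u v. u \<in> V \<and> v \<in> V \<and> u \<noteq> v \<and> e = {u, v})"

definition connected_graph :: "'a set \<Rightarrow> 'a set set \<Rightarrow> bool" where
  "connected_graph V E \<longleftrightarrow> V \<noteq> {} \<and> (\<forall>u\<in>V. \<forall>v\<in>V. (adj E)\<^sup>*\<^sup>* u v)"

definition has_cycle :: "'a set \<Rightarrow> 'a set set \<Rightarrow> bool" where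
  "has_cycle V E \<longleftrightarrow> (\<exists>xs. length xs \<ge> 3 \<and> distinct xs \<and> set xs \<subseteq> V \<and>
      (\<forall>i < length xs. {xs ! i, xs ! ((i + 1) mod length xs)} \<in> E))"

definition is_tree :: "'a set \<Rightarrow> 'a set set \<Rightarrow> bool" where
  "is_tree V E \<longleftrightarrow> simple_graph V E \<and> connected_graph V E \<and> \<not> has_cycle V E"

definition subgraph :: "'a set \<Rightarrow> 'a set set \<Rightarrow> 'a set \<Rightarrow> 'a set set \<Rightarrow> bool" where
  "subgraph H F V E \<longleftrightarrow> H \<subseteq> V \<and> F \<subseteq> E \<and> (\<forall>e\<in>F. e \<subseteq> H)"

definition proper_edges :: "('a set \<Rightarrow> nat) \<Rightarrow> 'a set set \<Rightarrow> bool" where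
  "proper_edges c F \<longleftrightarrow> (\<forall>e\<in>F. \<forall>f\<in>F. e \<noteq> f \<and> e \<inter> f \<noteq> {} \<longrightarrow> c e \<noteq> c f)"

definition proper_S_tree ::
  "'a set \<Rightarrow> 'a set set \<Rightarrow> ('a set \<Rightarrow> nat) \<Rightarrow> 'a set \<Rightarrow> bool" where
  "proper_S_tree V E c S \<longleftrightarrow> (\<exists>H F. subgraph H F V E \<and> is_tree H F \<and> S \<subseteq> H \<and> proper_edges c F)"

definition k_proper_coloring :: "nat \<Rightarrow> 'a set \<Rightarrow> 'a set set \<Rightarrow> ('a set \<Rightarrow> nat) \<Rightarrow> bool" where
  "k_proper_coloring k V E c \<longleftrightarrow> (\<forall>S. S \<subseteq> V \<and> card S = k \<longrightarrow> proper_S_tree V E c S)"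

definition px :: "nat \<Rightarrow> 'a set \<Rightarrow> 'a set set \<Rightarrow> nat" where
  "px k V E = (LEAST m. \<exists>c. k_proper_coloring k V E c \<and> card (c ` E) = m)"

definition complete_graph :: "nat \<Rightarrow> nat set set" where
  "complete_graph n = {{i, j} | i j. i < n \<and> j < n \<and> i \<noteq> j}"

definition cycle_graph :: "nat \<Rightarrow> nat set set" where
  "cycle_graph n = {{i, (i + 1) mod n} | i. i < n}"

definition wheel_graph :: "nat \<Rightarrow> nat set set" where
  "wheel_graph n = cycle_graph (n - 1) \<union> {{i, n - 1} | i. i < n - 1}"

end

theory Submission
  imports Defs
begin

text \<open>Lower bound: a connected graph on three distinct vertices cannot have pairwise disjoint
  edges, since in a matching every vertex reaches only itself and its partner; so two edges of
  any S-tree with \<open>|S| \<ge> 3\<close> meet and need different colours. Upper bound: each of the three graphs contains the Hamiltonian path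
  \<open>0 - 1 - \<dots> - (n-1)\<close>, a spanning tree that contains every vertex set S and is properly
  coloured by the parity of the smaller endpoint of an edge.\<close>

lemma matching_reachable_imp_edge:
  assumes matching: "\<forall>e\<in>F. \<forall>f\<in>F. e \<noteq> f \<longrightarrow> e \<inter> f = {}"
    and "(adj F)\<^sup>*\<^sup>* a v"
  shows "v = a \<or> {a, v} \<in> F"
  using \<open>(adj F)\<^sup>*\<^sup>* a v\<close>
proof induction
  case base
  then show ?case by simp
next
  case (step v w)
  then have vw: "{v, w} \<in> F" "v \<noteq> w" by (auto simp: adj_def)
  show ?case
  proof (cases "v = a")
    case True
    then show ?thesis using vw by simp
  next
    case False
    with step have av: "{a, v} \<in> F" by simp
    have "{a, v} = {v, w}" using matching[rule_format, OF av vw(1)] by auto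
    with vw have "w = a" by (auto simp: doubleton_eq_iff)
    then show ?thesis by simp
  qed
qed

lemma connected_graph_three_vertices_imp_meeting_edges:
  assumes "connected_graph H F" "a \<in> H" "b \<in> H" "d \<in> H" "a \<noteq> b" "a \<noteq> d" "b \<noteq> d"
  shows "\<exists>e\<in>F. \<exists>f\<in>F. e \<noteq> f \<and> e \<inter> f \<noteq> {}"
proof (rule ccontr)
  assume "\<not> ?thesis"
  then have matching: "\<forall>e\<in>F. \<forall>f\<in>F. e \<noteq> f \<longrightarrow> e \<inter> f = {}" by blast
  have "(adj F)\<^sup>*\<^sup>* a b" "(adj F)\<^sup>*\<^sup>* a d"
    using assms by (auto simp: connected_graph_def)
  then have "b = a \<or> {a, b} \<in> F" "d = a \<or> {a, d} \<in> F"
    by (simp_all add: matching_reachable_imp_edge[OF matching])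
  then have ab: "{a, b} \<in> F" and ad: "{a, d} \<in> F" using assms(5,6) by auto
  have "{a, b} \<noteq> {a, d}" using assms(7) by (auto simp: doubleton_eq_iff)
  with matching[rule_format, OF ab ad] show False by simp
qed

lemma k_proper_coloring_card_colours_ge_2:
  assumes "k_proper_coloring k V E c" "finite E" "3 \<le> k" "k \<le> card V"
  shows "2 \<le> card (c ` E)"
proof -
  obtain S where S: "S \<subseteq> V" "card S = k"
    using obtain_subset_with_card_n[OF assms(4)] by blast
  then obtain H F where HF: "subgraph H F V E" "is_tree H F" "S \<subseteq> H" "proper_edges c F"
    using assms(1) by (auto simp: k_proper_coloring_def proper_S_tree_def)
  obtain T where "T \<subseteq> S" "card T = 3"
    using obtain_subset_with_card_n[of 3 S] S(2) assms(3) by blast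
  then obtain a b d where "{a, b, d} \<subseteq> H" "a \<noteq> b" "a \<noteq> d" "b \<noteq> d"
    using HF(3) unfolding card_3_iff by blast
  moreover have "connected_graph H F" using HF(2) by (simp add: is_tree_def)
  ultimately obtain e f where ef: "e \<in> F" "f \<in> F" "e \<noteq> f" "e \<inter> f \<noteq> {}"
    using connected_graph_three_vertices_imp_meeting_edges by (metis insert_subset)
  with HF(4) have "c e \<noteq> c f" by (auto simp: proper_edges_def)
  moreover have "e \<in> E" "f \<in> E" using HF(1) ef by (auto simp: subgraph_def)
  ultimately have "{c e, c f} \<subseteq> c ` E" "card {c e, c f} = 2" by auto
  then show ?thesis using assms(2) by (metis card_mono finite_imageI)
qed

lemma k_proper_coloring_if_proper_spanning_tree:
  assumes "T \<subseteq> E" "\<forall>e\<in>T. e \<subseteq> V" "is_tree V T" "proper_edges c T"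
  shows "k_proper_coloring k V E c"
  unfolding k_proper_coloring_def proper_S_tree_def subgraph_def
  using assms by blast

definition path_graph :: "nat \<Rightarrow> nat set set" where
  "path_graph n = {{i, Suc i} | i. Suc i < n}"

lemma path_graph_edge_iff: "{x, y} \<in> path_graph n \<longleftrightarrow> (y = Suc x \<or> x = Suc y) \<and> max x y < n"
  by (auto simp: path_graph_def doubleton_eq_iff)

lemma path_graph_lower_neighbour_unique:
  assumes "{a, x} \<in> path_graph n" "{b, x} \<in> path_graph n" "a \<le> x" "b \<le> x"
  shows "a = b"
  using assms by (auto simp: path_graph_edge_iff)

lemma path_graph_acyclic: "\<not> has_cycle V (path_graph n)"
proof
  assume "has_cycle V (path_graph n)"
  then obtain xs where xs: "length xs \<ge> 3" "distinct xs"
    "\<forall>i < length xs. {xs ! i, xs ! ((i + 1) mod length xs)} \<in> path_graph n"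
    by (auto simp: has_cycle_def)
  define m where "m = length xs"
  define M where "M = Max (set xs)"
  have "m \<ge> 3" using xs(1) by (simp add: m_def)
  have "xs \<noteq> []" using xs(1) by auto
  then have "M \<in> set xs" by (simp add: M_def)
  then obtain i where i: "i < m" "xs ! i = M" by (auto simp: in_set_conv_nth m_def)
  \<comment> \<open>The maximum of the cycle has a successor \<open>xs ! j\<close> and a predecessor \<open>xs ! l\<close>; both are
    path neighbours below it, hence equal, contradicting distinctness since \<open>m \<ge> 3\<close>.\<close>
  define j where "j = (i + 1) mod m"
  define l where "l = (if i = 0 then m - 1 else i - 1)"
  have "j < m" "l < m" using i \<open>m \<ge> 3\<close> by (auto simp: j_def l_def)
  have "(l + 1) mod m = i" using i \<open>m \<ge> 3\<close> by (auto simp: l_def)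
  have "j \<noteq> l"
    using i \<open>m \<ge> 3\<close> by (cases "i = m - 1") (auto simp: j_def l_def)
  have "{xs ! j, M} \<in> path_graph n"
    using xs(3) i by (auto simp: j_def m_def insert_commute)
  moreover have "{xs ! l, M} \<in> path_graph n"
    using xs(3) \<open>l < m\<close> \<open>(l + 1) mod m = i\<close> i by (metis m_def)
  moreover have "xs ! j \<le> M" "xs ! l \<le> M"
    using \<open>j < m\<close> \<open>l < m\<close> by (simp_all add: M_def m_def)
  ultimately have "xs ! j = xs ! l" by (rule path_graph_lower_neighbour_unique)
  then show False
    using xs(2) \<open>j < m\<close> \<open>l < m\<close> \<open>j \<noteq> l\<close> by (simp add: nth_eq_iff_index_eq m_def)
qed

lemma path_graph_reachable_from_0:
  assumes "u < n"
  shows "(adj (path_graph n))\<^sup>*\<^sup>* 0 u"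
  using assms
proof (induction u)
  case 0
  then show ?case by simp
next
  case (Suc u)
  then have "adj (path_graph n) u (Suc u)" by (auto simp: adj_def path_graph_def)
  with Suc show ?case by (simp add: rtranclp.rtrancl_into_rtrancl)
qed

lemma symp_adj: "symp (adj E)"
  by (auto intro: sympI simp: adj_def insert_commute)

lemma is_tree_path_graph:
  assumes "n \<ge> 1"
  shows "is_tree {0..<n} (path_graph n)"
  unfolding is_tree_def
proof (intro conjI)
  show "simple_graph {0..<n} (path_graph n)"
    unfolding simple_graph_def
  proof (intro conjI ballI)
    fix e assume "e \<in> path_graph n"
    then obtain i where "e = {i, Suc i}" "Suc i < n" by (auto simp: path_graph_def)
    then show "\<exists>u v. u \<in> {0..<n} \<and> v \<in> {0..<n} \<and> u \<noteq> v \<and> e = {u, v}"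
      by (intro exI[of _ i] exI[of _ "Suc i"]) simp
  qed simp
  have "(adj (path_graph n))\<^sup>*\<^sup>* u v" if "u < n" "v < n" for u v
  proof -
    have "(adj (path_graph n))\<^sup>*\<^sup>* u 0"
      using path_graph_reachable_from_0[OF \<open>u < n\<close>] by (simp add: symp_adj symp_rtranclp sympD)
    then show ?thesis
      using path_graph_reachable_from_0[OF \<open>v < n\<close>] by (rule rtranclp_trans)
  qed
  then show "connected_graph {0..<n} (path_graph n)"
    using assms by (auto simp: connected_graph_def)
  show "\<not> has_cycle {0..<n} (path_graph n)" by (rule path_graph_acyclic)
qed

definition parity_colouring :: "nat set \<Rightarrow> nat" where
  "parity_colouring e = Min e mod 2"

lemma proper_edges_parity_colouring_path_graph:
  "proper_edges parity_colouring (path_graph n)"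
  unfolding proper_edges_def
proof (intro ballI impI)
  fix e f assume "e \<in> path_graph n" "f \<in> path_graph n" and meet: "e \<noteq> f \<and> e \<inter> f \<noteq> {}"
  then obtain i j where ij: "e = {i, Suc i}" "f = {j, Suc j}" by (auto simp: path_graph_def)
  with meet have "j = Suc i \<or> i = Suc j" by auto
  then have "i mod 2 \<noteq> j mod 2" by (auto simp: mod_Suc split: if_splits)
  then show "parity_colouring e \<noteq> parity_colouring f"
    using ij by (simp add: parity_colouring_def)
qed

lemma card_parity_colouring_image:
  assumes "path_graph n \<subseteq> E" "\<forall>e\<in>E. e \<subseteq> {0..<n}" "n \<ge> 3"
  shows "card (parity_colouring ` E) = 2"
proof -
  have "{0, 1} \<in> E" "{1, 2} \<in> E"
    using assms(1,3) by (auto simp: path_graph_edge_iff)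
  then have "parity_colouring {0, 1} \<in> parity_colouring ` E"
    "parity_colouring {1, 2} \<in> parity_colouring ` E" by blast+
  then have "parity_colouring ` E = {0, 1}"
    by (auto simp: parity_colouring_def)
  then show ?thesis by simp
qed

lemma px_eq_2_if_path_graph_subset:
  assumes "path_graph n \<subseteq> E" "\<forall>e\<in>E. e \<subseteq> {0..<n}" "3 \<le> k" "k \<le> n"
  shows "px k {0..<n} E = 2"
  unfolding px_def
proof (rule Least_equality)
  have "\<forall>e\<in>path_graph n. e \<subseteq> {0..<n}" using assms(1,2) by blast
  then have "k_proper_coloring k {0..<n} E parity_colouring"
    using assms is_tree_path_graph[of n] proper_edges_parity_colouring_path_graph[of n]
    by (intro k_proper_coloring_if_proper_spanning_tree[where T = "path_graph n"]) auto
  moreover have "card (parity_colouring ` E) = 2"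
    using card_parity_colouring_image[OF assms(1,2)] assms(3,4) by simp
  ultimately show "\<exists>c. k_proper_coloring k {0..<n} E c \<and> card (c ` E) = 2" by blast
next
  have "finite E" using assms(2) by (auto intro: finite_subset[of _ "Pow {0..<n}"])
  then show "2 \<le> m" if "\<exists>c. k_proper_coloring k {0..<n} E c \<and> card (c ` E) = m" for m
    using that assms(3,4) k_proper_coloring_card_colours_ge_2[of k "{0..<n}" E] by auto
qed

lemma path_graph_subset_complete_graph: "path_graph n \<subseteq> complete_graph n"
  by (force simp: path_graph_def complete_graph_def)

lemma path_graph_subset_cycle_graph: "path_graph n \<subseteq> cycle_graph n"
  by (force simp: path_graph_def cycle_graph_def)

lemma path_graph_subset_wheel_graph: "path_graph n \<subseteq> wheel_graph n"
proof
  fix e assume "e \<in> path_graph n"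
  then obtain i where e: "e = {i, Suc i}" "Suc i < n" by (auto simp: path_graph_def)
  show "e \<in> wheel_graph n"
  proof (cases "Suc i < n - 1")
    case True
    then have "e \<in> cycle_graph (n - 1)" using e
      by (auto simp: cycle_graph_def intro!: exI[of _ i])
    then show ?thesis by (simp add: wheel_graph_def)
  next
    case False
    then show ?thesis using e by (auto simp: wheel_graph_def)
  qed
qed

lemma cycle_graph_edges_subset: "n \<ge> 1 \<Longrightarrow> \<forall>e\<in>cycle_graph n. e \<subseteq> {0..<n}"
  by (auto simp: cycle_graph_def)

lemma wheel_graph_edges_subset:
  assumes "n \<ge> 2"
  shows "\<forall>e\<in>wheel_graph n. e \<subseteq> {0..<n}"
proof -
  have "\<forall>e\<in>cycle_graph (n - 1). e \<subseteq> {0..<n - 1}"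
    using cycle_graph_edges_subset[of "n - 1"] assms by simp
  then show ?thesis unfolding wheel_graph_def by fastforce
qed

theorem mainTheorem8:
  fixes n k :: nat
  assumes "n \<ge> 3" and "3 \<le> k" and "k \<le> n"
  shows "px k {0..<n} (complete_graph n) = 2
       \<and> px k {0..<n} (cycle_graph n) = 2
       \<and> px k {0..<n} (wheel_graph n) = 2"
proof (intro conjI)
  show "px k {0..<n} (complete_graph n) = 2"
    using path_graph_subset_complete_graph assms
    by (intro px_eq_2_if_path_graph_subset) (auto simp: complete_graph_def)
  show "px k {0..<n} (cycle_graph n) = 2"
    using path_graph_subset_cycle_graph cycle_graph_edges_subset assms
    by (intro px_eq_2_if_path_graph_subset) auto
  show "px k {0..<n} (wheel_graph n) = 2"
    using path_graph_subset_wheel_graph wheel_graph_edges_subset assms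
    by (intro px_eq_2_if_path_graph_subset) auto
qed

end
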